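(* Let $G$ be a group with neutral element $e$ and let $A=\bigoplus_{g\in G}A_g$ be a strongly $G$-graded algebra ($A_gA_h=A_{gh}$) with $A_e=\mathbb{C}$ and each $A_g$ one-dimensional (equivalently, a $\mathbb{C}[G]$-Galois object). Choose $0\neq u_g\in A_g$ for each $g$, and let $\lambda:G\times G\to\mathbb{C}^\times$ be defined by $u_gu_h=\lambda(g,h)u_{gh}$ (a 2-cocycle). Then $\Lambda(g,h):=\lambda(g,h)\lambda(h^{-1},g^{-1})$ is trivial in $H^2(G,\mathbb{C}^\times)$, i.e. there is a map $\mu:G\to\mathbb{C}^\times$ with $\Lambda(g,h)=\mu(g)\mu(h)\mu(gh)^{-1}$ for all $g,h\in G$.
   Context: $H^2(G,\mathbb{C}^\times)$ is the second group cohomology of $G$ with coefficients in $\mathbb{C}^\times$ (trivial action): 2-cocycles are maps $\lambda:G\times G\to\mathbb{C}^\times$ with $\lambda(g,h)\lambda(gh,k)=\lambda(h,k)\lambda(g,hk)$, modulo coboundaries $(g,h)\mapsto\mu(g)\mu(h)\mu(gh)^{-1}$. *)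

theory Defs
  imports Complex_Main "HOL-Algebra.Group"
begin

text \<open>A unital associative complex algebra is modelled as a ring 'a together with a
  central injective unital ring homomorphism phi from the complex numbers
  (scalar multiplication c.x is phi c * x).\<close>

definition complex_algebra_emb :: "(complex \<Rightarrow> 'a::ring_1) \<Rightarrow> bool" where
  "complex_algebra_emb phi \<longleftrightarrow>
     inj phi \<and> phi 1 = 1 \<and>
     (\<forall>a b. phi (a + b) = phi a + phi b) \<and>
     (\<forall>a b. phi (a * b) = phi a * phi b) \<and>
     (\<forall>c x. phi c * x = x * phi c)"

definition prod_span :: "('a::ring_1) set \<Rightarrow> 'a set \<Rightarrow> 'a set" where
  "prod_span X Y = {(\<Sum>i<n. x i * y i) | (n::nat) x y. \<forall>i<n. x i \<in> X \<and> y i \<in> Y}"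

definition strongly_graded_Galois ::
  "('g, 'm) monoid_scheme \<Rightarrow> (complex \<Rightarrow> 'a::ring_1) \<Rightarrow> ('g \<Rightarrow> 'a set) \<Rightarrow> bool" where
  "strongly_graded_Galois G phi A \<longleftrightarrow>
     complex_algebra_emb phi \<and>
     \<comment> \<open>each A g is a complex subspace\<close>
     (\<forall>g\<in>carrier G. 0 \<in> A g \<and> (\<forall>x\<in>A g. \<forall>y\<in>A g. x + y \<in> A g)
                      \<and> (\<forall>c. \<forall>x\<in>A g. phi c * x \<in> A g)) \<and>
     \<comment> \<open>A is the (internal) direct sum of the A g\<close>
     (\<forall>a::'a. \<exists>!c::'g \<Rightarrow> 'a. (\<forall>g\<in>carrier G. c g \<in> A g) \<and> (\<forall>g. g \<notin> carrier G \<longrightarrow> c g = 0)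
              \<and> finite {g. c g \<noteq> 0} \<and> a = (\<Sum>g\<in>{g. c g \<noteq> 0}. c g)) \<and>
     \<comment> \<open>strong grading\<close>
     (\<forall>g\<in>carrier G. \<forall>h\<in>carrier G. prod_span (A g) (A h) = A (g \<otimes>\<^bsub>G\<^esub> h)) \<and>
     \<comment> \<open>A_e = C\<close>
     A \<one>\<^bsub>G\<^esub> = range phi \<and>
     \<comment> \<open>each A g is one-dimensional\<close>
     (\<forall>g\<in>carrier G. \<exists>v\<in>A g. v \<noteq> 0 \<and> A g = {phi c * v | c. True})"

end

theory Submission
  imports Defs
begin

text \<open>Let \<open>\<mu>(k)\<close> be the scalar with \<open>u(k) u(k\<inverse>) = \<mu>(k)\<close>; it exists since the product lies
  in \<open>A(e) = \<complex>\<close>, and it is nonzero since otherwise \<open>A(k) A(k\<inverse>)\<close>, spanned by this product,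
  would vanish, although it equals \<open>A(e) \<ni> 1\<close>. Expanding \<open>u(g) u(h) u(h\<inverse>) u(g\<inverse>)\<close> from the
  outside with the cocycle relation gives \<open>\<lambda>(g,h) \<lambda>(h\<inverse>,g\<inverse>) \<mu>(gh)\<close>, while contracting the
  middle pair first gives \<open>\<mu>(g) \<mu>(h)\<close>, because scalars are central.\<close>

locale complex_algebra =
  fixes phi :: "complex \<Rightarrow> 'a::ring_1"
  assumes complex_algebra_emb: "complex_algebra_emb phi"
begin

lemma phi_eq_iff [simp]: "phi a = phi b \<longleftrightarrow> a = b"
  using complex_algebra_emb unfolding complex_algebra_emb_def by (auto dest: injD)

lemma phi_one [simp]: "phi 1 = 1"
  and phi_add: "phi (a + b) = phi a + phi b"
  and phi_mult: "phi (a * b) = phi a * phi b"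
  and phi_commute: "phi c * x = x * phi c"
  using complex_algebra_emb unfolding complex_algebra_emb_def by blast+

lemma phi_zero [simp]: "phi 0 = 0"
  using phi_add[of 0 0] by simp

lemma phi_eq_zero_iff [simp]: "phi c = 0 \<longleftrightarrow> c = 0"
  using phi_eq_iff[of c 0] by simp

lemma mult_phi_left_commute: "x * (phi c * y) = phi c * (x * y)"
  by (metis mult.assoc phi_commute)

end

lemma prod_span_annihilated:
  assumes "\<And>x y. x \<in> X \<Longrightarrow> y \<in> Y \<Longrightarrow> x * y = 0"
  shows "prod_span X Y \<subseteq> {0}"
  using assms unfolding prod_span_def by (auto intro!: sum.neutral)

locale graded_Galois_basis = group G
  for G :: "('g, 'm) monoid_scheme" (structure) +
  fixes phi :: "complex \<Rightarrow> 'a::ring_1"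
    and A :: "'g \<Rightarrow> 'a set"
    and u :: "'g \<Rightarrow> 'a"
    and lam :: "'g \<Rightarrow> 'g \<Rightarrow> complex"
  assumes graded: "strongly_graded_Galois G phi A"
    and basis_mem: "g \<in> carrier G \<Longrightarrow> u g \<in> A g"
    and basis_nonzero: "g \<in> carrier G \<Longrightarrow> u g \<noteq> 0"
    and basis_mult: "\<lbrakk>g \<in> carrier G; h \<in> carrier G\<rbrakk> \<Longrightarrow> u g * u h = phi (lam g h) * u (g \<otimes>\<^bsub>G\<^esub> h)"

sublocale graded_Galois_basis \<subseteq> complex_algebra phi
  using graded unfolding strongly_graded_Galois_def by unfold_locales blast

context graded_Galois_basis
begin

lemma unit_component: "A \<one> = range phi"
  and strong_grading: "\<lbrakk>g \<in> carrier G; h \<in> carrier G\<rbrakk> \<Longrightarrow> prod_span (A g) (A h) = A (g \<otimes> h)"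
  and one_dimensional: "g \<in> carrier G \<Longrightarrow> \<exists>v\<in>A g. v \<noteq> 0 \<and> A g = {phi c * v | c. True}"
  using graded unfolding strongly_graded_Galois_def by blast+

lemma component_eq_multiples_of_basis:
  assumes g: "g \<in> carrier G" and x: "x \<in> A g"
  obtains c where "x = phi c * u g"
proof -
  obtain v where v: "A g = {phi c * v | c. True}"
    using one_dimensional[OF g] by blast
  obtain b where b: "u g = phi b * v"
    using basis_mem[OF g] v by auto
  with basis_nonzero[OF g] have "b \<noteq> 0"
    by auto
  obtain a where "x = phi a * v"
    using x v by auto
  moreover have "phi (a / b) * u g = phi (a / b * b) * v"
    by (simp only: b phi_mult mult.assoc)
  ultimately have "x = phi (a / b) * u g"
    using \<open>b \<noteq> 0\<close> by simp
  then show thesis ..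
qed

lemma basis_mult_inv_nonzero:
  assumes k: "k \<in> carrier G"
  shows "u k * u (inv k) \<noteq> 0"
proof
  assume vanish: "u k * u (inv k) = 0"
  have "x * y = 0" if "x \<in> A k" "y \<in> A (inv k)" for x y
  proof -
    obtain a where "x = phi a * u k"
      using component_eq_multiples_of_basis k \<open>x \<in> A k\<close> .
    moreover obtain b where "y = phi b * u (inv k)"
      using component_eq_multiples_of_basis k \<open>y \<in> A (inv k)\<close> by (metis inv_closed)
    ultimately show "x * y = 0"
      by (simp add: mult.assoc mult_phi_left_commute[of "u k"] vanish)
  qed
  then have "prod_span (A k) (A (inv k)) \<subseteq> {0}"
    by (rule prod_span_annihilated)
  then have "A \<one> \<subseteq> {0}"
    using strong_grading[of k "inv k"] k by simp
  then show False
    using unit_component by (metis phi_one rangeI singletonD subsetD zero_neq_one)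
qed

lemma basis_mult_inv_in_scalars:
  assumes k: "k \<in> carrier G"
  shows "u k * u (inv k) \<in> range phi"
proof -
  obtain c where "u \<one> = phi c"
    using basis_mem[of \<one>] unit_component by auto
  then show ?thesis
    using basis_mult[of k "inv k"] k by (simp flip: phi_mult)
qed

definition mu :: "'g \<Rightarrow> complex" where
  "mu k = inv_into UNIV phi (u k * u (inv k))"

lemma phi_mu: "k \<in> carrier G \<Longrightarrow> phi (mu k) = u k * u (inv k)"
  unfolding mu_def by (rule f_inv_into_f[OF basis_mult_inv_in_scalars])

lemma mu_nonzero: "k \<in> carrier G \<Longrightarrow> mu k \<noteq> 0"
  using phi_mu basis_mult_inv_nonzero by fastforce

lemma symmetrized_cocycle_coboundary:
  assumes g: "g \<in> carrier G" and h: "h \<in> carrier G"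
  shows "lam g h * lam (inv h) (inv g) * mu (g \<otimes> h) = mu g * mu h"
proof -
  let ?w = "(u g * u h) * (u (inv h) * u (inv g))"
  have "?w = phi (lam g h) * u (g \<otimes> h) * (phi (lam (inv h) (inv g)) * u (inv (g \<otimes> h)))"
    using g h by (simp add: basis_mult inv_mult_group)
  also have "\<dots> = phi (lam g h) * phi (lam (inv h) (inv g)) * (u (g \<otimes> h) * u (inv (g \<otimes> h)))"
    by (simp only: mult.assoc mult_phi_left_commute[of "u (g \<otimes> h)"])
  also have "\<dots> = phi (lam g h * lam (inv h) (inv g) * mu (g \<otimes> h))"
    using g h by (simp only: phi_mult phi_mu m_closed)
  finally have expand: "?w = phi (lam g h * lam (inv h) (inv g) * mu (g \<otimes> h))" .
  have "?w = u g * (u h * u (inv h)) * u (inv g)"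
    by (simp only: mult.assoc)
  also have "\<dots> = u g * phi (mu h) * u (inv g)"
    using h by (simp only: phi_mu)
  also have "\<dots> = phi (mu h) * (u g * u (inv g))"
    by (simp only: mult.assoc mult_phi_left_commute[of "u g"])
  also have "\<dots> = phi (mu h * mu g)"
    using g by (simp add: phi_mu phi_mult)
  finally show ?thesis
    using expand by (simp add: mult.commute)
qed

end

theorem lemma4p6:
  fixes G :: "('g, 'm) monoid_scheme"
    and phi :: "complex \<Rightarrow> 'a::ring_1"
    and A :: "'g \<Rightarrow> 'a set"
    and u :: "'g \<Rightarrow> 'a"
    and lam :: "'g \<Rightarrow> 'g \<Rightarrow> complex"
  assumes "group G"
    and "strongly_graded_Galois G phi A"
    and "\<forall>g\<in>carrier G. u g \<in> A g \<and> u g \<noteq> 0"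
    and "\<forall>g\<in>carrier G. \<forall>h\<in>carrier G. u g * u h = phi (lam g h) * u (g \<otimes>\<^bsub>G\<^esub> h)"
  shows "\<exists>\<mu>::'g \<Rightarrow> complex. (\<forall>g\<in>carrier G. \<mu> g \<noteq> 0) \<and>
           (\<forall>g\<in>carrier G. \<forall>h\<in>carrier G.
              lam g h * lam (inv\<^bsub>G\<^esub> h) (inv\<^bsub>G\<^esub> g) = \<mu> g * \<mu> h / \<mu> (g \<otimes>\<^bsub>G\<^esub> h))"
proof -
  interpret graded_Galois_basis G phi A u lam
    using assms by (intro graded_Galois_basis.intro graded_Galois_basis_axioms.intro) auto
  show ?thesis
  proof (intro exI[of _ mu] conjI ballI)
    show "mu g \<noteq> 0" if "g \<in> carrier G" for g
      using mu_nonzero that .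
    show "lam g h * lam (inv\<^bsub>G\<^esub> h) (inv\<^bsub>G\<^esub> g) = mu g * mu h / mu (g \<otimes>\<^bsub>G\<^esub> h)"
      if "g \<in> carrier G" "h \<in> carrier G" for g h
      using symmetrized_cocycle_coboundary[OF that] mu_nonzero[of "g \<otimes>\<^bsub>G\<^esub> h"] that
      by (simp add: field_simps)
  qed
qed

end
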